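(* Let $f:\mathbb{R}^d\to\mathbb{R}$ be differentiable, let $k\in\mathbb{N}$, let $x_0,\dots,x_k\in\mathbb{R}^d$, $B_k\in\mathbb{S}^d$, and $\sigma,\delta>0$. Define $$m_k(s):=\Big\langle \nabla f(x_k)+\frac{1}{k+1}\sum_{i=0}^k(2i+1)\nabla f(x_i),\,s\Big\rangle+\frac12\langle B_ks,s\rangle+\frac{\sigma}{4}\|s\|^4.$$ Suppose $s_k\in\mathbb{R}^d$ satisfies $\|\nabla m_k(s_k)\|\le\delta\|s_k\|$, and set $x_{k+1}:=x_k+s_k$, $r_k:=\nabla f(x_{k+1})-\nabla f(x_k)-B_ks_k$, and $$\bar g_{k+1}:=\frac{1}{(k+1)(k+2)}\Big(\sum_{i=0}^{k}(2i+1)\nabla f(x_i)+(k+1)\nabla f(x_{k+1})\Big).$$ Then $$\big\|(k+2)\bar g_{k+1}+\sigma\|s_k\|^2s_k\big\|\le\|r_k\|+\delta\|s_k\|.$$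
   Context: $\mathbb{S}^d$ denotes the set of real symmetric $d\times d$ matrices; $\|\cdot\|$ is the Euclidean norm. *)

theory Defs
  imports "HOL-Analysis.Analysis"
begin

definition grad :: "('a::real_inner \<Rightarrow> real) \<Rightarrow> 'a \<Rightarrow> 'a" where
  "grad f x = (THE D. GDERIV f x :> D)"

end

theory Submission
  imports Defs
begin

(* For symmetric B the gradient of m_k at s_k is g + B s_k + sigma |s_k|^2 s_k, where g is the
   linear coefficient of m_k; and (k+2) gbar_{k+1} = (1/(k+1)) sum_i (2i+1) grad f(x_i) + grad f(x_{k+1}).
   Hence (k+2) gbar_{k+1} + sigma |s_k|^2 s_k = grad m_k(s_k) + r_k exactly, and the bound is the
   triangle inequality. *)

lemma GDERIV_unique:
  assumes "GDERIV f x :> D" and "GDERIV f x :> D'"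
  shows "D = D'"
proof -
  have "(\<lambda>h. h \<bullet> D) = (\<lambda>h. h \<bullet> D')"
    using assms unfolding gderiv_def by (rule has_derivative_unique)
  then have "(D - D') \<bullet> D = (D - D') \<bullet> D'"
    by metis
  then have "(D - D') \<bullet> (D - D') = 0"
    by (simp add: inner_diff_right)
  then show ?thesis
    by simp
qed

lemma GDERIV_imp_grad:
  assumes "GDERIV f x :> D"
  shows "grad f x = D"
  unfolding grad_def using assms GDERIV_unique by blast

lemma GDERIV_inner_left: "GDERIV (\<lambda>u. g \<bullet> u) x :> g"
  unfolding gderiv_def
  by (rule has_derivative_subst[OF bounded_linear.has_derivative[OF bounded_linear_inner_right
        has_derivative_ident]]) (simp add: inner_commute)

lemma GDERIV_quadratic_form:
  fixes B :: "real^'n^'n"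
  assumes "transpose B = B"
  shows "GDERIV (\<lambda>u. (1/2) * ((B *v u) \<bullet> u)) x :> B *v x"
proof -
  have B_self_adjoint: "(B *v h) \<bullet> x = h \<bullet> (B *v x)" for h
    by (metis assms dot_lmul_matrix vector_transpose_matrix)
  have B_deriv: "((*v) B has_derivative (*v) B) (at x)"
    by (rule bounded_linear.has_derivative[OF matrix_vector_mul_bounded_linear has_derivative_ident])
  show ?thesis
    unfolding gderiv_def
    by (rule derivative_eq_intros B_deriv refl | simp)+
      (simp add: fun_eq_iff B_self_adjoint inner_commute[of "B *v x"])
qed

lemma GDERIV_norm_power_4: "GDERIV (\<lambda>u. (c/4) * norm u ^ 4) x :> (c * norm x ^ 2) *\<^sub>R x"
proof -
  have norm_power_4: "norm u ^ 4 = (u \<bullet> u)\<^sup>2" for u :: 'a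
    by (simp add: power2_norm_eq_inner[symmetric] power_mult[symmetric])
  show ?thesis
    unfolding gderiv_def norm_power_4
    by (rule derivative_eq_intros refl | simp)+
      (simp add: fun_eq_iff algebra_simps inner_commute power2_norm_eq_inner)
qed

lemma GDERIV_quartic_regularized_model:
  fixes B :: "real^'n^'n"
  assumes "transpose B = B"
  shows "GDERIV (\<lambda>u. g \<bullet> u + (1/2) * ((B *v u) \<bullet> u) + (\<sigma>/4) * norm u ^ 4) x
           :> g + B *v x + (\<sigma> * norm x ^ 2) *\<^sub>R x"
  by (intro GDERIV_add GDERIV_inner_left GDERIV_quadratic_form GDERIV_norm_power_4 assms)

theorem lemma3p1:
  fixes f :: "real^'d \<Rightarrow> real"
    and k :: nat
    and x :: "nat \<Rightarrow> real^'d"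
    and B :: "real^'d^'d"
    and \<sigma> \<delta> :: real
    and s :: "real^'d"
  assumes diff: "\<And>y. f differentiable (at y)"
    and symB: "transpose B = B"
    and sigma_pos: "\<sigma> > 0"
    and delta_pos: "\<delta> > 0"
  defines "m \<equiv> (\<lambda>u::real^'d.
              (grad f (x k) + (1 / real (k+1)) *\<^sub>R (\<Sum>i=0..k. real (2*i+1) *\<^sub>R grad f (x i))) \<bullet> u
              + (1/2) * ((B *v u) \<bullet> u) + (\<sigma> / 4) * norm u ^ 4)"
  assumes step: "norm (grad m s) \<le> \<delta> * norm s"
  defines "x1 \<equiv> x k + s"
  defines "r \<equiv> grad f x1 - grad f (x k) - B *v s"
  defines "gbar \<equiv> (1 / (real (k+1) * real (k+2))) *\<^sub>R
              ((\<Sum>i=0..k. real (2*i+1) *\<^sub>R grad f (x i)) + real (k+1) *\<^sub>R grad f x1)"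
  shows "norm (real (k+2) *\<^sub>R gbar + (\<sigma> * norm s ^ 2) *\<^sub>R s) \<le> norm r + \<delta> * norm s"
proof -
  define S where "S = (\<Sum>i=0..k. real (2*i+1) *\<^sub>R grad f (x i))"
  define G where "G = grad f (x k) + (1 / real (k+1)) *\<^sub>R S"
  have grad_m: "grad m s = G + B *v s + (\<sigma> * norm s ^ 2) *\<^sub>R s"
    unfolding m_def S_def G_def
    by (intro GDERIV_imp_grad GDERIV_quartic_regularized_model symB)
  have "real (k+2) *\<^sub>R gbar = (1 / real (k+1)) *\<^sub>R S + grad f x1"
    unfolding gbar_def S_def[symmetric] scaleR_add_right scaleR_scaleR
    by (simp add: field_simps del: of_nat_Suc of_nat_add)
  then have "norm (real (k+2) *\<^sub>R gbar + (\<sigma> * norm s ^ 2) *\<^sub>R s) = norm (grad m s + r)"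
    unfolding grad_m G_def r_def by (simp add: algebra_simps)
  also have "\<dots> \<le> norm (grad m s) + norm r"
    by (rule norm_triangle_ineq)
  finally show ?thesis
    using step by linarith
qed

end
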